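(* Let $\delta>0$, $m>64\pi^2$, $\kappa>0$, $\mu^\star>0$, and let $\varepsilon\in(0,1)$, $\ell>0$, $\gamma>0$ satisfy: $\ell\ge\delta$; $-2^5\xi^2+(\mu^\star\varepsilon+6\ell)\xi-(\gamma+1)\ell\le0$ for all $\xi\in\mathbb{R}$; $2\gamma^2-3\ell\ge0$; $e^\varepsilon<\frac{1+2\kappa}{1+\kappa}$; $e^{(\gamma+1)\varepsilon}(1+3\varepsilon^3)<\frac{m}{64\pi^2}$; and $e^{(\ell-\delta)t}(1+(\varepsilon-\ell t)^3)\ge1+\varepsilon^3$ for all $t\in(0,\varepsilon/\ell)$. Put $\tau(t)=\varepsilon-\ell t$, $a(t)=2^5e^{(\gamma+1)\tau}$, $b(t)=8e^{\tau}$ and $$\underline U(s,t):=\frac{a(s^{3/2}+3\tau^3s)}{(s^{1/2}+\tau^3)^3},\qquad \underline W(s,t):=\frac{bs}{s^{1/2}+\tau^3},\qquad(s,t)\in[0,1]\times[0,\varepsilon/\ell).$$ Then for each $t\in[0,\varepsilon/\ell)$ the map $s\mapsto\underline U(s,t)$ on $[0,1]$ is nonnegative, increasing and concave; $\underline U(0,t)=0$ for all $t\in[0,\varepsilon/\ell)$; $\underline U(s,t)\to2^5$ as $t\uparrow\varepsilon/\ell$ for every $s\in(0,1]$; $$\sup_{t\in(0,\varepsilon/\ell)}\underline U(1,t)<\frac{m}{2\pi^2};$$ and $\mathcal P^{\mu^\star}(\underline U,\underline W)\le0$ for all $(s,t)\in(0,1)\times(0,\varepsilon/\ell)$.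
   Context: For functions $\phi,\psi$ and the constant $\mu^\star>0$, the operator is $\mathcal P^{\mu^\star}(\phi,\psi):=\phi_t-16s^{3/2}\phi_{ss}-4\phi_s\big(\psi-\frac{\mu^\star s}{4}\big)$. *)

theory Defs
  imports "HOL-Analysis.Analysis"
begin

definition partial_s :: "(real \<Rightarrow> real \<Rightarrow> real) \<Rightarrow> real \<Rightarrow> real \<Rightarrow> real" where
  "partial_s \<phi> s t = deriv (\<lambda>s'. \<phi> s' t) s"

definition partial_t :: "(real \<Rightarrow> real \<Rightarrow> real) \<Rightarrow> real \<Rightarrow> real \<Rightarrow> real" where
  "partial_t \<phi> s t = deriv (\<lambda>t'. \<phi> s t') t"

definition partial_ss :: "(real \<Rightarrow> real \<Rightarrow> real) \<Rightarrow> real \<Rightarrow> real \<Rightarrow> real" where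
  "partial_ss \<phi> s t = deriv (\<lambda>s'. deriv (\<lambda>s''. \<phi> s'' t) s') s"

definition opP :: "real \<Rightarrow> (real \<Rightarrow> real \<Rightarrow> real) \<Rightarrow> (real \<Rightarrow> real \<Rightarrow> real) \<Rightarrow> real \<Rightarrow> real \<Rightarrow> real" where
  "opP \<mu> \<phi> \<psi> s t =
     partial_t \<phi> s t - 16 * s powr (3/2) * partial_ss \<phi> s t
     - 4 * partial_s \<phi> s t * (\<psi> s t - \<mu> * s / 4)"

definition tau :: "real \<Rightarrow> real \<Rightarrow> real \<Rightarrow> real" where
  "tau eps l t = eps - l * t"

definition aa :: "real \<Rightarrow> real \<Rightarrow> real \<Rightarrow> real \<Rightarrow> real" where
  "aa eps l \<gamma> t = 2^5 * exp ((\<gamma> + 1) * tau eps l t)"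

definition bb :: "real \<Rightarrow> real \<Rightarrow> real \<Rightarrow> real" where
  "bb eps l t = 8 * exp (tau eps l t)"

definition Ulow :: "real \<Rightarrow> real \<Rightarrow> real \<Rightarrow> real \<Rightarrow> real \<Rightarrow> real" where
  "Ulow eps l \<gamma> s t =
     aa eps l \<gamma> t * (s powr (3/2) + 3 * (tau eps l t)^3 * s)
       / (s powr (1/2) + (tau eps l t)^3)^3"

definition Wlow :: "real \<Rightarrow> real \<Rightarrow> real \<Rightarrow> real \<Rightarrow> real" where
  "Wlow eps l s t = bb eps l t * s / (s powr (1/2) + (tau eps l t)^3)"

end

theory Submission
  imports Defs
begin

text \<open>In the variable x = sqrt s and with c = tau^3, the subsolution reads
  U = a (x^3 + 3 c x^2) / (x + c)^3.  Its s-derivative 3 a c^2 / (x + c)^4 is positive and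
  decreasing in s, which gives monotonicity and concavity, and at tau = 0 the profile collapses
  to the constant a = 2^5.  The operator P(U, W) factors as a s / (x + c)^4 times a bracket
  which, by exp tau \<ge> 1 + tau and tau \<le> eps, is at most 3 tau^3 (x + c) times the quadratic
  of the hypotheses evaluated at xi = tau^2 / (x + c).\<close>

lemma powr_three_halves: "s \<ge> 0 \<Longrightarrow> s powr (3/2) = s * sqrt (s::real)"
  using powr_add[of s 1 "1/2"] by (simp add: powr_half_sqrt)

lemma concave_on_cong:
  "(\<And>x. x \<in> S \<Longrightarrow> f x = g x) \<Longrightarrow> concave_on S f \<longleftrightarrow> concave_on S g"
  unfolding concave_on_iff convex_def by (smt (verit))

lemma convex_on_real_interiorI:
  fixes f :: "real \<Rightarrow> real"
  assumes "convex S" and "continuous_on S f"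
    and deriv: "\<And>x. x \<in> interior S \<Longrightarrow> (f has_real_derivative f' x) (at x)"
    and mono: "\<And>x y. x \<in> interior S \<Longrightarrow> y \<in> interior S \<Longrightarrow> x \<le> y \<Longrightarrow> f' x \<le> f' y"
  shows "convex_on S f"
proof (rule convex_on_linorderI)
  fix t x y :: real
  assume t: "0 < t" "t < 1" and xy: "x \<in> S" "y \<in> S" "x < y"
  have Icc: "{x..y} \<subseteq> S"
    using xy \<open>convex S\<close> by (intro connected_contains_Icc convex_connected)
  then have Ioo: "{x<..<y} \<subseteq> interior S"
    by (intro interior_maximal) auto
  have slope: "\<exists>\<xi>\<in>{a<..<b}. f b - f a = (b - a) * f' \<xi>" if "x \<le> a" "a < b" "b \<le> y" for a b
  proof -
    have "continuous_on {a..b} f"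
      by (rule continuous_on_subset[OF \<open>continuous_on S f\<close>]) (use Icc that in auto)
    moreover have deriv_ab: "\<And>z. a < z \<Longrightarrow> z < b \<Longrightarrow> (f has_real_derivative f' z) (at z)"
      using Ioo that by (intro deriv) auto
    ultimately obtain L \<xi> where "a < \<xi>" "\<xi> < b" "DERIV f \<xi> :> L" "f b - f a = (b - a) * L"
      using MVT[OF \<open>a < b\<close>] real_differentiable_def by meson
    then show ?thesis
      using DERIV_unique deriv_ab by fastforce
  qed
  define z where "z = (1 - t) * x + t * y"
  have zx: "z - x = t * (y - x)" and yz: "y - z = (1 - t) * (y - x)"
    by (simp_all add: z_def algebra_simps)
  have "0 < z - x" "0 < y - z"
    unfolding zx yz using t xy by simp_all
  then have "x < z" "z < y"
    by simp_all
  then obtain \<xi> \<eta> where \<xi>: "x < \<xi>" "\<xi> < z" "f z - f x = (z - x) * f' \<xi>"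
    and \<eta>: "z < \<eta>" "\<eta> < y" "f y - f z = (y - z) * f' \<eta>"
    using slope[of x z] slope[of z y] by auto
  have "f' \<xi> \<le> f' \<eta>"
    using \<xi> \<eta> Ioo by (intro mono) auto
  then have "(y - x) * ((1 - t) * (f z - f x)) \<le> (y - x) * (t * (f y - f z))"
    using \<xi>(3) \<eta>(3) t xy unfolding zx yz
    by (simp add: mult_left_mono mult.commute mult.left_commute)
  then have "(1 - t) * (f z - f x) \<le> t * (f y - f z)"
    using xy by simp
  then show "f ((1 - t) *\<^sub>R x + t *\<^sub>R y) \<le> (1 - t) * f x + t * f y"
    by (simp add: z_def algebra_simps)
qed (fact \<open>convex S\<close>)

definition profile :: "real \<Rightarrow> real \<Rightarrow> real \<Rightarrow> real" where
  "profile A c s = A * (s * sqrt s + 3 * c * s) / (sqrt s + c)^3"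

lemma profile_nonneg: "A \<ge> 0 \<Longrightarrow> c > 0 \<Longrightarrow> s \<ge> 0 \<Longrightarrow> profile A c s \<ge> 0"
  unfolding profile_def by (intro divide_nonneg_nonneg mult_nonneg_nonneg) auto

lemma continuous_on_profile: "c > 0 \<Longrightarrow> continuous_on {0..} (profile A c)"
  unfolding profile_def
  by (intro continuous_intros) (smt (verit) atLeast_iff real_sqrt_ge_zero power_eq_0_iff)

lemma profile_has_real_derivative:
  assumes "c > 0" "s > 0"
  shows "(profile A c has_real_derivative 3 * A * c^2 / (sqrt s + c)^4) (at s)"
proof -
  define x where "x = sqrt s"
  have x: "x > 0" "s = x^2"
    using assms by (auto simp: x_def)
  have "sqrt s + c > 0"
    using assms by (simp add: add_pos_pos)
  have "(profile A c has_real_derivative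
      A * ((1 * sqrt s + s * (inverse (sqrt s) / 2) + 3 * c) * (sqrt s + c)^3
        - (s * sqrt s + 3 * c * s) * (3 * (sqrt s + c)^2 * (inverse (sqrt s) / 2)))
      / ((sqrt s + c)^3)^2) (at s)"
    unfolding profile_def[abs_def] using assms \<open>sqrt s + c > 0\<close>
    by (auto intro!: derivative_eq_intros simp: field_simps)
  moreover have "A * ((1 * sqrt s + s * (inverse (sqrt s) / 2) + 3 * c) * (sqrt s + c)^3
        - (s * sqrt s + 3 * c * s) * (3 * (sqrt s + c)^2 * (inverse (sqrt s) / 2)))
      / ((sqrt s + c)^3)^2 = 3 * A * c^2 / (sqrt s + c)^4"
    unfolding x_def[symmetric] using x assms \<open>sqrt s + c > 0\<close>[folded x_def]
    by (simp add: field_simps) (simp add: algebra_simps power2_eq_square power3_eq_cube eval_nat_numeral)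
  ultimately show ?thesis
    by simp
qed

lemma profile_slope_has_real_derivative:
  assumes "c > 0" "s > 0"
  shows "((\<lambda>s. 3 * A * c^2 / (sqrt s + c)^4) has_real_derivative
    - 6 * A * c^2 / (sqrt s * (sqrt s + c)^5)) (at s)"
proof -
  have "sqrt s > 0" "sqrt s + c > 0"
    using assms by (simp_all add: add_pos_pos)
  have "((\<lambda>y. 3 * A * c^2 / y^4) has_real_derivative -12 * A * c^2 / y^5) (at y)" if "y \<noteq> 0" for y
    using that by (auto intro!: derivative_eq_intros simp: field_simps eval_nat_numeral)
  moreover have "((\<lambda>s. sqrt s + c) has_real_derivative inverse (sqrt s) / 2) (at s)"
    using assms by (auto intro!: derivative_eq_intros)
  ultimately have "((\<lambda>s. 3 * A * c^2 / (sqrt s + c)^4) has_real_derivative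
      -12 * A * c^2 / (sqrt s + c)^5 * (inverse (sqrt s) / 2)) (at s)"
    using \<open>sqrt s + c > 0\<close> by (intro DERIV_chain2) auto
  then show ?thesis
    using \<open>sqrt s > 0\<close> \<open>sqrt s + c > 0\<close> by (simp add: field_simps)
qed

lemma profile_slope_antimono:
  assumes "A \<ge> 0" "c > 0" "0 \<le> s" "s \<le> s'"
  shows "3 * A * c^2 / (sqrt s' + c)^4 \<le> 3 * A * c^2 / (sqrt s + c)^4"
proof -
  have "0 \<le> s'"
    using assms by linarith
  then have pos: "0 < sqrt s + c" "0 < sqrt s' + c" and le: "sqrt s + c \<le> sqrt s' + c"
    using assms by (simp_all add: add_nonneg_pos)
  have "(sqrt s + c)^4 \<le> (sqrt s' + c)^4"
    using pos le by (simp add: power_mono)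
  then show ?thesis
    using pos assms by (simp add: divide_left_mono)
qed

lemma strict_mono_on_profile:
  assumes "A > 0" "c > 0"
  shows "strict_mono_on {0..} (profile A c)"
proof (rule strict_mono_onI)
  fix r s :: real
  assume "r \<in> {0..}" "s \<in> {0..}" "r < s"
  show "profile A c r < profile A c s"
  proof (rule DERIV_pos_imp_increasing_open[OF \<open>r < s\<close>])
    fix x assume "r < x" "x < s"
    then have "x > 0"
      using \<open>r \<in> {0..}\<close> by simp
    then have "sqrt x + c > 0"
      using assms by (simp add: add_pos_pos)
    then have "3 * A * c^2 / (sqrt x + c)^4 > 0"
      using assms by simp
    then show "\<exists>y. (profile A c has_real_derivative y) (at x) \<and> y > 0"
      using profile_has_real_derivative[OF \<open>c > 0\<close> \<open>x > 0\<close>] by blast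
  next
    show "continuous_on {r..s} (profile A c)"
      using \<open>r \<in> {0..}\<close> by (auto intro: continuous_on_subset[OF continuous_on_profile[OF \<open>c > 0\<close>]])
  qed
qed

lemma concave_on_profile:
  assumes "A \<ge> 0" "c > 0"
  shows "concave_on {0..} (profile A c)"
  unfolding concave_on_def
proof (rule convex_on_real_interiorI)
  show "continuous_on {0..} (\<lambda>s. - profile A c s)"
    using continuous_on_profile[OF \<open>c > 0\<close>] by (intro continuous_intros)
  show "((\<lambda>s. - profile A c s) has_real_derivative - (3 * A * c^2 / (sqrt s + c)^4)) (at s)"
    if "s \<in> interior {0..}" for s
    using that assms by (intro derivative_intros profile_has_real_derivative) auto
  show "- (3 * A * c^2 / (sqrt s + c)^4) \<le> - (3 * A * c^2 / (sqrt s' + c)^4)"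
    if "s \<in> interior {0..}" "s' \<in> interior {0..}" "s \<le> s'" for s s'
    using that assms profile_slope_antimono[of A c s s'] by auto
qed simp

lemma profile_has_real_derivative_coeff:
  assumes "s \<ge> 0" "c > 0"
  shows "((\<lambda>c. profile A c s) has_real_derivative - 6 * A * c * s / (sqrt s + c)^4) (at c)"
proof -
  define x y where "x = sqrt s" and "y = sqrt s + c"
  have "y > 0"
    using assms by (simp add: y_def add_nonneg_pos)
  have "((\<lambda>c. A * (s * x + 3 * c * s) / (x + c)^3) has_real_derivative
      (A * (3 * s) * (x + c)^3 - A * (s * x + 3 * c * s) * (3 * (x + c)^2)) / ((x + c)^3 * (x + c)^3)) (at c)"
    using \<open>y > 0\<close> unfolding y_def x_def[symmetric]
    by (intro DERIV_divide) (auto intro!: derivative_eq_intros)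
  moreover have "A * (3 * s) * (x + c)^3 - A * (s * x + 3 * c * s) * (3 * (x + c)^2) = - 6 * A * c * s * (x + c)^2"
    by (simp add: algebra_simps power2_eq_square power3_eq_cube)
  moreover have "- 6 * A * c * s * y^2 / (y^3 * y^3) = - 6 * A * c * s / y^4"
    using \<open>y > 0\<close> by (simp add: field_simps eval_nat_numeral)
  ultimately show ?thesis
    unfolding profile_def x_def[symmetric] by (simp add: x_def y_def)
qed

lemma tau_pos: "l > 0 \<Longrightarrow> t < eps / l \<Longrightarrow> tau eps l t > 0"
  by (simp add: tau_def field_simps)

lemma tau_le: "l \<ge> 0 \<Longrightarrow> t \<ge> 0 \<Longrightarrow> tau eps l t \<le> eps"
  by (simp add: tau_def)

lemma tau_has_real_derivative: "((\<lambda>t. tau eps l t) has_real_derivative - l) (at t)"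
  unfolding tau_def by (rule derivative_eq_intros refl | simp)+

lemma aa_has_real_derivative:
  "((\<lambda>t. aa eps l \<gamma> t) has_real_derivative - (\<gamma> + 1) * l * aa eps l \<gamma> t) (at t)"
  unfolding aa_def
  by (rule DERIV_cong[OF DERIV_cmult[OF DERIV_fun_exp[OF DERIV_cmult[OF tau_has_real_derivative]]]])
    (simp add: algebra_simps)

lemma Ulow_eq_profile:
  "s \<ge> 0 \<Longrightarrow> Ulow eps l \<gamma> s t = profile (aa eps l \<gamma> t) (tau eps l t ^ 3) s"
  by (simp add: Ulow_def profile_def powr_three_halves powr_half_sqrt)

lemma Ulow_zero [simp]: "Ulow eps l \<gamma> 0 t = 0"
  by (simp add: Ulow_def)

lemma Ulow_nonneg: "s \<ge> 0 \<Longrightarrow> tau eps l t > 0 \<Longrightarrow> Ulow eps l \<gamma> s t \<ge> 0"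
  by (simp add: Ulow_eq_profile profile_nonneg aa_def)

lemma strict_mono_on_Ulow: "tau eps l t > 0 \<Longrightarrow> strict_mono_on {0..} (\<lambda>s. Ulow eps l \<gamma> s t)"
  using strict_mono_on_profile[of "aa eps l \<gamma> t" "tau eps l t ^ 3"]
  unfolding monotone_on_def by (simp add: Ulow_eq_profile aa_def)

lemma concave_on_Ulow: "tau eps l t > 0 \<Longrightarrow> concave_on {0..} (\<lambda>s. Ulow eps l \<gamma> s t)"
  by (rule concave_on_cong[THEN iffD2, OF _ concave_on_profile[of "aa eps l \<gamma> t" "tau eps l t ^ 3"]])
    (simp_all add: Ulow_eq_profile aa_def)

lemma Ulow_tendsto_at_final_time:
  assumes "l \<noteq> 0" "s > 0"
  shows "((\<lambda>t. Ulow eps l \<gamma> s t) \<longlongrightarrow> 2^5) (at (eps / l))"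
proof -
  have "tau eps l (eps / l) = 0"
    using assms by (simp add: tau_def)
  then have "Ulow eps l \<gamma> s (eps / l) = 2^5"
    using assms by (simp add: Ulow_eq_profile profile_def aa_def power3_eq_cube)
  moreover have "isCont (\<lambda>t. Ulow eps l \<gamma> s t) (eps / l)"
    using assms unfolding Ulow_def aa_def tau_def by (intro continuous_intros) simp_all
  ultimately show ?thesis
    by (metis isContD)
qed

lemma Ulow_one_le:
  assumes "0 \<le> tau eps l t" "tau eps l t \<le> eps" "\<gamma> \<ge> -1"
  shows "Ulow eps l \<gamma> 1 t \<le> 2^5 * exp ((\<gamma> + 1) * eps) * (1 + 3 * eps^3)"
proof -
  define \<tau> where "\<tau> = tau eps l t"
  have "\<tau> \<ge> 0"
    using assms by (simp add: \<tau>_def)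
  have "Ulow eps l \<gamma> 1 t = 2^5 * exp ((\<gamma> + 1) * \<tau>) * (1 + 3 * \<tau>^3) / (1 + \<tau>^3)^3"
    by (simp add: Ulow_def aa_def \<tau>_def)
  also have "\<dots> \<le> 2^5 * exp ((\<gamma> + 1) * \<tau>) * (1 + 3 * \<tau>^3) / 1"
    using \<open>\<tau> \<ge> 0\<close> by (intro frac_le) simp_all
  also have "\<dots> \<le> 2^5 * exp ((\<gamma> + 1) * eps) * (1 + 3 * eps^3)"
    unfolding div_by_1 using assms by (intro mult_mono) (auto simp: \<tau>_def mult_left_mono power_mono)
  finally show ?thesis .
qed

lemma SUP_Ulow_one_le:
  assumes "l > 0" "eps > 0" "\<gamma> \<ge> -1"
  shows "(SUP t \<in> {0<..<eps / l}. Ulow eps l \<gamma> 1 t) \<le> 2^5 * exp ((\<gamma> + 1) * eps) * (1 + 3 * eps^3)"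
proof (rule cSUP_least)
  show "{0<..<eps / l} \<noteq> {}"
    using assms by (simp add: field_simps)
  show "Ulow eps l \<gamma> 1 t \<le> 2^5 * exp ((\<gamma> + 1) * eps) * (1 + 3 * eps^3)"
    if "t \<in> {0<..<eps / l}" for t
    using that assms by (intro Ulow_one_le tau_le less_imp_le[OF tau_pos]) auto
qed

lemma partial_s_Ulow:
  assumes "s > 0" "tau eps l t > 0"
  shows "partial_s (Ulow eps l \<gamma>) s t
    = 3 * aa eps l \<gamma> t * (tau eps l t ^ 3)^2 / (sqrt s + tau eps l t ^ 3)^4"
  unfolding partial_s_def
proof (rule DERIV_imp_deriv, rule has_field_derivative_transform_within_open[OF _ open_greaterThan])
  show "(profile (aa eps l \<gamma> t) (tau eps l t ^ 3) has_real_derivative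
      3 * aa eps l \<gamma> t * (tau eps l t ^ 3)^2 / (sqrt s + tau eps l t ^ 3)^4) (at s)"
    using assms by (intro profile_has_real_derivative) auto
qed (use assms in \<open>auto simp: Ulow_eq_profile\<close>)

lemma partial_ss_Ulow:
  assumes "s > 0" "tau eps l t > 0"
  shows "partial_ss (Ulow eps l \<gamma>) s t
    = - 6 * aa eps l \<gamma> t * (tau eps l t ^ 3)^2 / (sqrt s * (sqrt s + tau eps l t ^ 3)^5)"
  unfolding partial_ss_def
proof (rule DERIV_imp_deriv, rule has_field_derivative_transform_within_open[OF _ open_greaterThan])
  show "((\<lambda>s. 3 * aa eps l \<gamma> t * (tau eps l t ^ 3)^2 / (sqrt s + tau eps l t ^ 3)^4) has_real_derivative
      - 6 * aa eps l \<gamma> t * (tau eps l t ^ 3)^2 / (sqrt s * (sqrt s + tau eps l t ^ 3)^5)) (at s)"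
    using assms by (intro profile_slope_has_real_derivative) auto
qed (use assms partial_s_Ulow[unfolded partial_s_def] in auto)

lemma partial_t_Ulow:
  assumes "s \<ge> 0" "tau eps l t > 0"
  shows "partial_t (Ulow eps l \<gamma>) s t
    = - (\<gamma> + 1) * l * Ulow eps l \<gamma> s t
      + 18 * l * aa eps l \<gamma> t * tau eps l t ^ 5 * s / (sqrt s + tau eps l t ^ 3)^4"
proof -
  have Ulow: "Ulow eps l \<gamma> s t' = aa eps l \<gamma> t' * profile 1 (tau eps l t' ^ 3) s" for t'
    using assms by (simp add: Ulow_eq_profile profile_def)
  have "((\<lambda>t. profile 1 (tau eps l t ^ 3) s) has_real_derivative
      - 6 * 1 * tau eps l t ^ 3 * s / (sqrt s + tau eps l t ^ 3)^4 * (3 * tau eps l t ^ 2 * - l)) (at t)"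
  proof (rule DERIV_chain2[where f = "\<lambda>c. profile 1 c s"])
    show "((\<lambda>t. tau eps l t ^ 3) has_real_derivative 3 * tau eps l t ^ 2 * - l) (at t)"
      by (rule derivative_eq_intros tau_has_real_derivative refl | simp)+
  qed (use assms profile_has_real_derivative_coeff[of s "tau eps l t ^ 3" 1] in simp)
  with aa_has_real_derivative have deriv: "((\<lambda>t. Ulow eps l \<gamma> s t) has_real_derivative
      - (\<gamma> + 1) * l * aa eps l \<gamma> t * profile 1 (tau eps l t ^ 3) s
      + - 6 * 1 * tau eps l t ^ 3 * s / (sqrt s + tau eps l t ^ 3)^4 * (3 * tau eps l t ^ 2 * - l)
        * aa eps l \<gamma> t) (at t)"
    unfolding Ulow by (rule DERIV_mult)
  have "sqrt s + tau eps l t ^ 3 > 0"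
    using assms by (simp add: add_nonneg_pos)
  then have "- (\<gamma> + 1) * l * aa eps l \<gamma> t * profile 1 (tau eps l t ^ 3) s
      + - 6 * 1 * tau eps l t ^ 3 * s / (sqrt s + tau eps l t ^ 3)^4 * (3 * tau eps l t ^ 2 * - l)
        * aa eps l \<gamma> t
    = - (\<gamma> + 1) * l * Ulow eps l \<gamma> s t
      + 18 * l * aa eps l \<gamma> t * tau eps l t ^ 5 * s / (sqrt s + tau eps l t ^ 3)^4"
    unfolding Ulow by (simp add: field_simps eval_nat_numeral)
  with deriv show ?thesis
    unfolding partial_t_def by (metis DERIV_imp_deriv)
qed

definition opP_Ulow_factor :: "real \<Rightarrow> real \<Rightarrow> real \<Rightarrow> real \<Rightarrow> real \<Rightarrow> real" where
  "opP_Ulow_factor \<mu> l \<gamma> x \<tau> =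
     - (\<gamma> + 1) * l * (x + 3 * \<tau>^3) * (x + \<tau>^3) + 18 * l * \<tau>^5
     + 96 * \<tau>^6 * (1 - exp \<tau>) / (x + \<tau>^3) + 3 * \<mu> * \<tau>^6"

lemma opP_Ulow_factor_nonpos:
  fixes x \<tau> :: real
  assumes "x \<ge> 0" "0 < \<tau>" "\<tau> \<le> eps" "\<mu> \<ge> 0" "l \<ge> 0" "\<gamma> \<ge> -1"
    and quadratic: "- (2^5) * (\<tau>^2 / (x + \<tau>^3))^2 + (\<mu> * eps + 6 * l) * (\<tau>^2 / (x + \<tau>^3))
      - (\<gamma> + 1) * l \<le> 0"
  shows "opP_Ulow_factor \<mu> l \<gamma> x \<tau> \<le> 0"
proof -
  define y where "y = x + \<tau>^3"
  have "y > 0"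
    using assms by (simp add: y_def add_nonneg_pos)
  have cubic: "(\<gamma> + 1) * l * y * (3 * \<tau>^3) \<le> (\<gamma> + 1) * l * y * (x + 3 * \<tau>^3)"
    using assms \<open>y > 0\<close> by (intro mult_left_mono) auto
  have "1 - exp \<tau> \<le> - \<tau>"
    using exp_ge_add_one_self[of \<tau>] by linarith
  then have exponential: "96 * \<tau>^6 * (1 - exp \<tau>) / y \<le> 96 * \<tau>^6 * (- \<tau>) / y"
    using \<open>y > 0\<close> by (intro divide_right_mono mult_left_mono) auto
  have linear: "\<mu> * \<tau>^5 * \<tau> \<le> \<mu> * \<tau>^5 * eps"
    using assms by (intro mult_left_mono) auto
  have "opP_Ulow_factor \<mu> l \<gamma> x \<tau>
      \<le> - 3 * (\<gamma> + 1) * l * \<tau>^3 * y + 18 * l * \<tau>^5 - 96 * \<tau>^7 / y + 3 * \<mu> * eps * \<tau>^5"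
    using cubic exponential linear unfolding opP_Ulow_factor_def y_def[symmetric]
    by (simp add: algebra_simps eval_nat_numeral)
  also have "\<dots> = 3 * \<tau>^3 * y
      * (- (2^5) * (\<tau>^2 / y)^2 + (\<mu> * eps + 6 * l) * (\<tau>^2 / y) - (\<gamma> + 1) * l)"
    using \<open>y > 0\<close> by (simp add: field_simps eval_nat_numeral)
  also have "\<dots> \<le> 0"
    using quadratic assms \<open>y > 0\<close> unfolding y_def[symmetric] by (intro mult_nonneg_nonpos) auto
  finally show ?thesis .
qed

lemma opP_Ulow_Wlow_eq:
  assumes "s > 0" "tau eps l t > 0"
  shows "opP \<mu> (Ulow eps l \<gamma>) (Wlow eps l) s t
    = aa eps l \<gamma> t * s / (sqrt s + tau eps l t ^ 3)^4 * opP_Ulow_factor \<mu> l \<gamma> (sqrt s) (tau eps l t)"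
proof -
  define x \<tau> A where "x = sqrt s" and "\<tau> = tau eps l t" and "A = aa eps l \<gamma> t"
  define y where "y = x + \<tau>^3"
  have "x > 0" "\<tau> > 0"
    using assms by (auto simp: x_def \<tau>_def)
  then have "y > 0"
    by (simp add: y_def add_pos_pos)
  have "opP \<mu> (Ulow eps l \<gamma>) (Wlow eps l) s t
      = - (\<gamma> + 1) * l * (A * (s * x + 3 * \<tau>^3 * s) / y^3)
        + 18 * l * A * \<tau>^5 * s / y^4
        - 16 * (s * x) * (- 6 * A * (\<tau>^3)^2 / (x * y^5))
        - 4 * (3 * A * (\<tau>^3)^2 / y^4) * (8 * exp \<tau> * s / y - \<mu> * s / 4)"
    using assms unfolding opP_def
    by (simp add: partial_t_Ulow partial_s_Ulow partial_ss_Ulow Ulow_eq_profile profile_def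
        Wlow_def bb_def powr_three_halves powr_half_sqrt x_def \<tau>_def A_def y_def)
  also have "\<dots> = A * s / y^4 * opP_Ulow_factor \<mu> l \<gamma> x \<tau>"
    unfolding opP_Ulow_factor_def y_def[symmetric] using \<open>x > 0\<close> \<open>y > 0\<close>
    by (simp add: field_simps) (simp add: algebra_simps eval_nat_numeral)
  finally show ?thesis
    by (simp add: x_def \<tau>_def A_def y_def)
qed

lemma opP_Ulow_Wlow_nonpos:
  assumes "s > 0" "0 < tau eps l t" "tau eps l t \<le> eps" "\<mu> \<ge> 0" "l \<ge> 0" "\<gamma> \<ge> -1"
    and "\<And>\<xi>. - (2^5) * \<xi>^2 + (\<mu> * eps + 6 * l) * \<xi> - (\<gamma> + 1) * l \<le> 0"
  shows "opP \<mu> (Ulow eps l \<gamma>) (Wlow eps l) s t \<le> 0"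
  unfolding opP_Ulow_Wlow_eq[OF assms(1,2)]
  by (intro mult_nonneg_nonpos opP_Ulow_factor_nonpos[OF _ _ _ _ _ _ assms(7)])
    (use assms(1-6) in \<open>auto simp: aa_def\<close>)

theorem lemma3p7:
  fixes \<delta> m \<kappa> \<mu> eps l \<gamma> :: real
  assumes "\<delta> > 0" and "m > 64 * pi^2" and "\<kappa> > 0" and "\<mu> > 0"
    and "0 < eps" and "eps < 1" and "l > 0" and "\<gamma> > 0"
    and "l \<ge> \<delta>"
    and "\<forall>\<xi>::real. - (2^5) * \<xi>^2 + (\<mu> * eps + 6 * l) * \<xi> - (\<gamma> + 1) * l \<le> 0"
    and "2 * \<gamma>^2 - 3 * l \<ge> 0"
    and "exp eps < (1 + 2 * \<kappa>) / (1 + \<kappa>)"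
    and "exp ((\<gamma> + 1) * eps) * (1 + 3 * eps^3) < m / (64 * pi^2)"
    and "\<forall>t \<in> {0<..<eps / l}. exp ((l - \<delta>) * t) * (1 + (eps - l * t)^3) \<ge> 1 + eps^3"
  shows "(\<forall>t \<in> {0..<eps / l}.
            (\<forall>s \<in> {0..1}. Ulow eps l \<gamma> s t \<ge> 0)
          \<and> strict_mono_on {0..1} (\<lambda>s. Ulow eps l \<gamma> s t)
          \<and> concave_on {0..1} (\<lambda>s. Ulow eps l \<gamma> s t))
       \<and> (\<forall>t \<in> {0..<eps / l}. Ulow eps l \<gamma> 0 t = 0)
       \<and> (\<forall>s \<in> {0<..1}. ((\<lambda>t. Ulow eps l \<gamma> s t) \<longlongrightarrow> 2^5) (at_left (eps / l)))
       \<and> (SUP t \<in> {0<..<eps / l}. Ulow eps l \<gamma> 1 t) < m / (2 * pi^2)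
       \<and> (\<forall>s \<in> {0<..<1}. \<forall>t \<in> {0<..<eps / l}.
            opP \<mu> (Ulow eps l \<gamma>) (Wlow eps l) s t \<le> 0)"
  \<comment> \<open>Only the quadratic hypothesis and the bound on exp ((\<gamma> + 1) eps) (1 + 3 eps^3) are used.\<close>
proof -
  have \<tau>: "0 < tau eps l t" "tau eps l t \<le> eps" if "t \<in> {0..<eps / l}" for t
    using that \<open>l > 0\<close> by (auto intro: tau_pos tau_le)
  have slices: "(\<forall>s \<in> {0..1}. Ulow eps l \<gamma> s t \<ge> 0)
      \<and> strict_mono_on {0..1} (\<lambda>s. Ulow eps l \<gamma> s t)
      \<and> concave_on {0..1} (\<lambda>s. Ulow eps l \<gamma> s t)" if "t \<in> {0..<eps / l}" for t
    using \<tau>[OF that] Ulow_nonneg monotone_on_subset[OF strict_mono_on_Ulow]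
      convex_on_subset[OF concave_on_Ulow[unfolded concave_on_def]]
    by (auto simp: concave_on_def)
  have limit: "((\<lambda>t. Ulow eps l \<gamma> s t) \<longlongrightarrow> 2^5) (at_left (eps / l))" if "s \<in> {0<..1}" for s
    using that \<open>l > 0\<close> by (intro Lim_at_imp_Lim_at_within[OF Ulow_tendsto_at_final_time]) auto
  have "(SUP t \<in> {0<..<eps / l}. Ulow eps l \<gamma> 1 t) \<le> 2^5 * exp ((\<gamma> + 1) * eps) * (1 + 3 * eps^3)"
    using \<open>l > 0\<close> \<open>0 < eps\<close> \<open>\<gamma> > 0\<close> by (intro SUP_Ulow_one_le) auto
  also have "\<dots> < m / (2 * pi^2)"
    using \<open>exp ((\<gamma> + 1) * eps) * (1 + 3 * eps^3) < m / (64 * pi^2)\<close> by simp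
  finally have sup: "(SUP t \<in> {0<..<eps / l}. Ulow eps l \<gamma> 1 t) < m / (2 * pi^2)" .
  have pde: "opP \<mu> (Ulow eps l \<gamma>) (Wlow eps l) s t \<le> 0"
    if "s \<in> {0<..<1}" "t \<in> {0<..<eps / l}" for s t
    using that \<tau>[of t] \<open>\<mu> > 0\<close> \<open>l > 0\<close> \<open>\<gamma> > 0\<close> assms(10)
    by (intro opP_Ulow_Wlow_nonpos) auto
  show ?thesis
    using slices limit sup pde by simp
qed

end
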